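(* Let $(Y_0,Y_1,D,I_0)$ be observed, where $D\in\{0,1\}$ is a treatment received between a baseline period $0$ and a follow-up period $1$, and let $(Y_1(0),Y_1(1))$ be latent potential outcomes, with $$Y_0=Y_0(0),\qquad Y_1=Y_1(1)D+Y_1(0)(1-D).$$ Let $I_0$ take values in a baseline information set $\mathcal I_0$. Define $$\theta_{OLS}=\mathbb E[Y_1\mid D=1]-\mathbb E[Y_1\mid D=0],\qquad SB_1=\mathbb E[Y_1(0)\mid D=1]-\mathbb E[Y_1(0)\mid D=0],$$ and for $\iota_0\in\mathcal I_0$, $$SB_0(\iota_0)=\mathbb E[Y_0\mid D=1,I_0=\iota_0]-\mathbb E[Y_0\mid D=0,I_0=\iota_0].$$ Assume (bias set stability) that $$SB_1\in\Big[\inf_{\iota_0\in\mathcal I_0}SB_0(\iota_0),\ \sup_{\iota_0\in\mathcal I_0}SB_0(\iota_0)\Big].$$ Then the average treatment effect on the treated $ATT=\mathbb E[Y_1(1)-Y_1(0)\mid D=1]$ satisfies $$ATT\in\Big[\theta_{OLS}-\sup_{\iota_0\in\mathcal I_0}SB_0(\iota_0),\ \theta_{OLS}-\inf_{\iota_0\in\mathcal I_0}SB_0(\iota_0)\Big]\equiv\Theta_I .$$ Moreover these bounds are sharp: $\Theta_I$ is the identified set for $ATT$, i.e. every value in $\Theta_I$ is the ATT of some joint distribution of the latent and observed variables that is consistent with the distribution of the observed data, the model, and the bias set stability assumption.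
   Context: All conditional expectations are assumed to exist. The information set $\mathcal I_0$ may consist, e.g., of pre-treatment periods, values of baseline covariates, or data sources; $SB_0(\iota_0)$ is the baseline-period "selection bias" associated with the piece of information $\iota_0$. *)

theory Defs
  imports "HOL-Probability.Probability"
begin

definition cexp :: "'a measure \<Rightarrow> ('a \<Rightarrow> real) \<Rightarrow> 'a set \<Rightarrow> real" where
  "cexp M X A = (\<integral>\<omega>. indicator A \<omega> * X \<omega> \<partial>M) / measure M A"

definition evD :: "'a measure \<Rightarrow> ('a \<Rightarrow> real) \<Rightarrow> real \<Rightarrow> 'a set" where
  "evD M D d = {\<omega> \<in> space M. D \<omega> = d}"

definition evDI :: "'a measure \<Rightarrow> ('a \<Rightarrow> real) \<Rightarrow> ('a \<Rightarrow> 'i) \<Rightarrow> real \<Rightarrow> 'i \<Rightarrow> 'a set" where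
  "evDI M D I0 d \<iota> = {\<omega> \<in> space M. D \<omega> = d \<and> I0 \<omega> = \<iota>}"

definition theta_OLS :: "'a measure \<Rightarrow> ('a \<Rightarrow> real) \<Rightarrow> ('a \<Rightarrow> real) \<Rightarrow> real" where
  "theta_OLS M Y1 D = cexp M Y1 (evD M D 1) - cexp M Y1 (evD M D 0)"

definition SB1 :: "'a measure \<Rightarrow> ('a \<Rightarrow> real) \<Rightarrow> ('a \<Rightarrow> real) \<Rightarrow> real" where
  "SB1 M Y1_0 D = cexp M Y1_0 (evD M D 1) - cexp M Y1_0 (evD M D 0)"

definition SB0 :: "'a measure \<Rightarrow> ('a \<Rightarrow> real) \<Rightarrow> ('a \<Rightarrow> real) \<Rightarrow> ('a \<Rightarrow> 'i) \<Rightarrow> 'i \<Rightarrow> real" where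
  "SB0 M Y0 D I0 \<iota> = cexp M Y0 (evDI M D I0 1 \<iota>) - cexp M Y0 (evDI M D I0 0 \<iota>)"

definition ATT :: "'a measure \<Rightarrow> ('a \<Rightarrow> real) \<Rightarrow> ('a \<Rightarrow> real) \<Rightarrow> ('a \<Rightarrow> real) \<Rightarrow> real" where
  "ATT M Y1_0 Y1_1 D = cexp M (\<lambda>\<omega>. Y1_1 \<omega> - Y1_0 \<omega>) (evD M D 1)"

text \<open>Bias set stability. Inf/Sup are taken in the extended reals, so that
  an unbounded SB0 is handled correctly.\<close>
definition BSS :: "'a measure \<Rightarrow> ('a \<Rightarrow> real) \<Rightarrow> ('a \<Rightarrow> real) \<Rightarrow> ('a \<Rightarrow> real) \<Rightarrow> ('a \<Rightarrow> 'i) \<Rightarrow> 'i set \<Rightarrow> bool" where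
  "BSS M Y0 Y1_0 D I0 \<I>0 \<longleftrightarrow>
     (INF \<iota>\<in>\<I>0. ereal (SB0 M Y0 D I0 \<iota>)) \<le> ereal (SB1 M Y1_0 D) \<and>
     ereal (SB1 M Y1_0 D) \<le> (SUP \<iota>\<in>\<I>0. ereal (SB0 M Y0 D I0 \<iota>))"

definition Theta_I :: "'a measure \<Rightarrow> ('a \<Rightarrow> real) \<Rightarrow> ('a \<Rightarrow> real) \<Rightarrow> ('a \<Rightarrow> real) \<Rightarrow> ('a \<Rightarrow> 'i) \<Rightarrow> 'i set \<Rightarrow> real set" where
  "Theta_I M Y0 Y1 D I0 \<I>0 =
     {\<theta>. ereal (theta_OLS M Y1 D) - (SUP \<iota>\<in>\<I>0. ereal (SB0 M Y0 D I0 \<iota>)) \<le> ereal \<theta> \<and>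
          ereal \<theta> \<le> ereal (theta_OLS M Y1 D) - (INF \<iota>\<in>\<I>0. ereal (SB0 M Y0 D I0 \<iota>))}"

text \<open>Y0 = Y0(0) is a mere naming convention.\<close>
definition did_model :: "'a measure \<Rightarrow> 'i measure \<Rightarrow> ('a \<Rightarrow> real) \<Rightarrow> ('a \<Rightarrow> real) \<Rightarrow> ('a \<Rightarrow> real)
     \<Rightarrow> ('a \<Rightarrow> 'i) \<Rightarrow> ('a \<Rightarrow> real) \<Rightarrow> ('a \<Rightarrow> real) \<Rightarrow> 'i set \<Rightarrow> bool" where
  "did_model M MI Y0 Y1 D I0 Y1_0 Y1_1 \<I>0 \<longleftrightarrow>
     prob_space M \<and>
     Y0 \<in> borel_measurable M \<and> Y1 \<in> borel_measurable M \<and> D \<in> borel_measurable M \<and>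
     Y1_0 \<in> borel_measurable M \<and> Y1_1 \<in> borel_measurable M \<and> I0 \<in> measurable M MI \<and>
     (\<forall>\<iota>\<in>\<I>0. {\<iota>} \<in> sets MI) \<and>
     (AE \<omega> in M. D \<omega> \<in> {0, 1}) \<and>
     (AE \<omega> in M. I0 \<omega> \<in> \<I>0) \<and>
     (AE \<omega> in M. Y1 \<omega> = Y1_1 \<omega> * D \<omega> + Y1_0 \<omega> * (1 - D \<omega>)) \<and>
     measure M (evD M D 1) > 0 \<and> measure M (evD M D 0) > 0 \<and>
     (\<forall>\<iota>\<in>\<I>0. \<forall>d\<in>{0, 1}. measure M (evDI M D I0 d \<iota>) > 0) \<and>
     integrable M Y1 \<and> integrable M Y1_0 \<and>
     set_integrable M (evD M D 1) (\<lambda>\<omega>. Y1_1 \<omega>) \<and>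
     (\<forall>\<iota>\<in>\<I>0. \<forall>d\<in>{0, 1}. set_integrable M (evDI M D I0 d \<iota>) (\<lambda>\<omega>. Y0 \<omega>))"

definition obs_space :: "'i measure \<Rightarrow> (real \<times> real \<times> real \<times> 'i) measure" where
  "obs_space MI = borel \<Otimes>\<^sub>M borel \<Otimes>\<^sub>M borel \<Otimes>\<^sub>M MI"

definition joint_space :: "'i measure \<Rightarrow> ((real \<times> real \<times> real \<times> 'i) \<times> (real \<times> real)) measure" where
  "joint_space MI = obs_space MI \<Otimes>\<^sub>M (borel \<Otimes>\<^sub>M borel)"

definition pY0 :: "(real \<times> real \<times> real \<times> 'i) \<times> (real \<times> real) \<Rightarrow> real" where
  "pY0 z = fst (fst z)"
definition pY1 :: "(real \<times> real \<times> real \<times> 'i) \<times> (real \<times> real) \<Rightarrow> real" where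
  "pY1 z = fst (snd (fst z))"
definition pD :: "(real \<times> real \<times> real \<times> 'i) \<times> (real \<times> real) \<Rightarrow> real" where
  "pD z = fst (snd (snd (fst z)))"
definition pI0 :: "(real \<times> real \<times> real \<times> 'i) \<times> (real \<times> real) \<Rightarrow> 'i" where
  "pI0 z = snd (snd (snd (fst z)))"
definition pY1_0 :: "(real \<times> real \<times> real \<times> 'i) \<times> (real \<times> real) \<Rightarrow> real" where
  "pY1_0 z = fst (snd z)"
definition pY1_1 :: "(real \<times> real \<times> real \<times> 'i) \<times> (real \<times> real) \<Rightarrow> real" where
  "pY1_1 z = snd (snd z)"

end

theory Submission
  imports Defs
begin

text \<open>On the treated Y1 = Y1(1) and on the untreated Y1 = Y1(0), so ATT = theta_OLS - SB1 and bias
  set stability is literally the statement ATT \<in> Theta_I. For sharpness, note that the observed law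
  does not constrain Y1(0) on the treated: replacing it there by a constant c (and taking
  Y1(1) = Y1) leaves the observed variables untouched and gives SB1 = c - E[Y1 | D = 0], which
  equals theta_OLS - \<theta> for a suitable c. The law of observed and latent variables on the
  canonical product space then has the same observed distribution and ATT = \<theta>.\<close>

lemma evD_sets [measurable]: "D \<in> borel_measurable M \<Longrightarrow> evD M D d \<in> sets M"
  unfolding evD_def by measurable

lemma evDI_sets [measurable]:
  "D \<in> borel_measurable M \<Longrightarrow> I0 \<in> measurable M MI \<Longrightarrow> {\<iota>} \<in> sets MI \<Longrightarrow> evDI M D I0 d \<iota> \<in> sets M"
proof -
  assume meas: "D \<in> borel_measurable M" "I0 \<in> measurable M MI" "{\<iota>} \<in> sets MI"
  have "evDI M D I0 d \<iota> = evD M D d \<inter> (I0 -` {\<iota>} \<inter> space M)"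
    by (auto simp: evDI_def evD_def)
  then show ?thesis
    using meas by (simp add: sets.Int measurable_sets evD_sets)
qed

lemma cexp_cong_AE:
  assumes "A \<in> sets M" "X \<in> borel_measurable M" "Y \<in> borel_measurable M"
    and "AE \<omega> in M. \<omega> \<in> A \<longrightarrow> X \<omega> = Y \<omega>"
  shows "cexp M X A = cexp M Y A"
  unfolding cexp_def using assms
  by (subst integral_cong_AE[where g = "\<lambda>\<omega>. indicator A \<omega> * Y \<omega>"])
     (auto split: split_indicator elim!: AE_mp)

lemma cexp_diff:
  assumes "set_integrable M A X" "set_integrable M A Y"
  shows "cexp M (\<lambda>\<omega>. X \<omega> - Y \<omega>) A = cexp M X A - cexp M Y A"
  using Bochner_Integration.integral_diff[OF assms[unfolded set_integrable_def]]
  by (simp add: cexp_def right_diff_distrib diff_divide_distrib)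

lemma cexp_const:
  assumes "A \<in> sets M" "measure M A \<noteq> 0"
  shows "cexp M (\<lambda>_. c) A = c"
  using assms sets.sets_into_space[OF assms(1)] by (simp add: cexp_def Int_absorb2)

lemma cexp_distr:
  assumes h: "h \<in> measurable M N" and [measurable]: "f \<in> borel_measurable N" "B \<in> sets N"
  shows "cexp (distr M N h) f B = cexp M (\<lambda>\<omega>. f (h \<omega>)) (h -` B \<inter> space M)"
proof -
  have "(\<integral>z. indicator B z * f z \<partial>distr M N h) = (\<integral>\<omega>. indicator B (h \<omega>) * f (h \<omega>) \<partial>M)"
    by (intro integral_distr[OF h]) measurable
  also have "\<dots> = (\<integral>\<omega>. indicator (h -` B \<inter> space M) \<omega> * f (h \<omega>) \<partial>M)"
    by (intro Bochner_Integration.integral_cong) (auto split: split_indicator)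
  finally show ?thesis
    unfolding cexp_def using h by (simp add: measure_distr)
qed

lemma set_integrable_distr_iff:
  fixes f :: "_ \<Rightarrow> real"
  assumes h: "h \<in> measurable M N" and [measurable]: "f \<in> borel_measurable N" "B \<in> sets N"
  shows "set_integrable (distr M N h) B f \<longleftrightarrow> set_integrable M (h -` B \<inter> space M) (\<lambda>\<omega>. f (h \<omega>))"
proof -
  have "set_integrable (distr M N h) B f \<longleftrightarrow> integrable M (\<lambda>\<omega>. indicator B (h \<omega>) * f (h \<omega>))"
    unfolding set_integrable_def by (simp, intro integrable_distr_eq[OF h]) measurable
  also have "\<dots> \<longleftrightarrow> set_integrable M (h -` B \<inter> space M) (\<lambda>\<omega>. f (h \<omega>))"
    unfolding set_integrable_def
    by (rule Bochner_Integration.integrable_cong[OF refl]) (auto split: split_indicator)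
  finally show ?thesis .
qed

lemma (in finite_measure) countable_positive_fibres:
  assumes f: "f \<in> measurable M N"
    and "\<And>x. x \<in> S \<Longrightarrow> {x} \<in> sets N" "\<And>x. x \<in> S \<Longrightarrow> measure M (f -` {x} \<inter> space M) > 0"
  shows "countable S"
proof -
  interpret image: finite_measure "distr M N f"
    using f by (rule finite_measure_distr)
  have "S \<subseteq> {x. measure (distr M N f) {x} \<noteq> 0}"
    using assms by (fastforce simp: measure_distr)
  then show ?thesis
    using image.countable_support countable_subset by blast
qed

lemma ereal_diff_bounds_iff:
  fixes a t :: real and I S :: ereal
  shows "ereal a - S \<le> ereal t \<and> ereal t \<le> ereal a - I \<longleftrightarrow> I \<le> ereal (a - t) \<and> ereal (a - t) \<le> S"
  by (cases S; cases I) auto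

lemma mem_Theta_I_iff:
  "\<theta> \<in> Theta_I M Y0 Y1 D I0 \<I>0 \<longleftrightarrow>
     (INF \<iota>\<in>\<I>0. ereal (SB0 M Y0 D I0 \<iota>)) \<le> ereal (theta_OLS M Y1 D - \<theta>) \<and>
     ereal (theta_OLS M Y1 D - \<theta>) \<le> (SUP \<iota>\<in>\<I>0. ereal (SB0 M Y0 D I0 \<iota>))"
  unfolding Theta_I_def by (simp add: ereal_diff_bounds_iff)

lemma measurable_projections [measurable]:
  "pY0 \<in> borel_measurable (joint_space MI)" "pY1 \<in> borel_measurable (joint_space MI)"
  "pD \<in> borel_measurable (joint_space MI)" "pI0 \<in> measurable (joint_space MI) MI"
  "pY1_0 \<in> borel_measurable (joint_space MI)" "pY1_1 \<in> borel_measurable (joint_space MI)"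
  unfolding pY0_def pY1_def pD_def pI0_def pY1_0_def pY1_1_def joint_space_def obs_space_def
  by measurable

locale did_setting =
  fixes M :: "'a measure" and MI :: "'i measure"
    and Y0 Y1 D Y1_0 Y1_1 :: "'a \<Rightarrow> real" and I0 :: "'a \<Rightarrow> 'i" and \<I>0 :: "'i set"
  assumes model: "did_model M MI Y0 Y1 D I0 Y1_0 Y1_1 \<I>0"
begin

sublocale prob_space M
  using model by (simp add: did_model_def)

lemma measurable_variables [measurable]:
  "Y0 \<in> borel_measurable M" "Y1 \<in> borel_measurable M" "D \<in> borel_measurable M"
  "I0 \<in> measurable M MI" "Y1_0 \<in> borel_measurable M" "Y1_1 \<in> borel_measurable M"
  using model by (simp_all add: did_model_def)

lemma ATT_eq_theta_OLS_minus_SB1: "ATT M Y1_0 Y1_1 D = theta_OLS M Y1 D - SB1 M Y1_0 D"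
proof -
  have Y1_eq: "AE \<omega> in M. Y1 \<omega> = Y1_1 \<omega> * D \<omega> + Y1_0 \<omega> * (1 - D \<omega>)"
    using model by (simp add: did_model_def)
  have treated: "cexp M Y1 (evD M D 1) = cexp M Y1_1 (evD M D 1)"
    using Y1_eq by (intro cexp_cong_AE) (auto simp: evD_def elim!: AE_mp)
  have untreated: "cexp M Y1 (evD M D 0) = cexp M Y1_0 (evD M D 0)"
    using Y1_eq by (intro cexp_cong_AE) (auto simp: evD_def elim!: AE_mp)
  have "set_integrable M (evD M D 1) Y1_1"
    using model by (simp add: did_model_def)
  moreover have "set_integrable M (evD M D 1) Y1_0"
    unfolding set_integrable_def
    by (rule integrable_mult_indicator) (measurable, use model in \<open>simp add: did_model_def\<close>)
  ultimately have "ATT M Y1_0 Y1_1 D = cexp M Y1_1 (evD M D 1) - cexp M Y1_0 (evD M D 1)"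
    unfolding ATT_def by (rule cexp_diff)
  then show ?thesis
    unfolding theta_OLS_def SB1_def treated untreated by simp
qed

lemma ATT_mem_Theta_I: "BSS M Y0 Y1_0 D I0 \<I>0 \<Longrightarrow> ATT M Y1_0 Y1_1 D \<in> Theta_I M Y0 Y1 D I0 \<I>0"
  unfolding mem_Theta_I_iff ATT_eq_theta_OLS_minus_SB1 BSS_def by simp

lemma countable_information_set: "countable \<I>0"
proof (rule countable_positive_fibres)
  fix \<iota> assume \<iota>: "\<iota> \<in> \<I>0"
  then show "{\<iota>} \<in> sets MI"
    using model by (simp add: did_model_def)
  have "0 < measure M (evDI M D I0 1 \<iota>)"
    using model \<iota> by (simp add: did_model_def)
  also have "\<dots> \<le> measure M (I0 -` {\<iota>} \<inter> space M)"
    using \<open>{\<iota>} \<in> sets MI\<close> by (intro finite_measure_mono) (auto simp: evDI_def)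
  finally show "measure M (I0 -` {\<iota>} \<inter> space M) > 0" .
qed measurable

definition joint :: "'a \<Rightarrow> (real \<times> real \<times> real \<times> 'i) \<times> real \<times> real" where
  "joint \<omega> = ((Y0 \<omega>, Y1 \<omega>, D \<omega>, I0 \<omega>), (Y1_0 \<omega>, Y1_1 \<omega>))"

definition joint_law :: "((real \<times> real \<times> real \<times> 'i) \<times> real \<times> real) measure" where
  "joint_law = distr M (joint_space MI) joint"

lemma projections_joint [simp]:
  "pY0 (joint \<omega>) = Y0 \<omega>" "pY1 (joint \<omega>) = Y1 \<omega>" "pD (joint \<omega>) = D \<omega>" "pI0 (joint \<omega>) = I0 \<omega>"
  "pY1_0 (joint \<omega>) = Y1_0 \<omega>" "pY1_1 (joint \<omega>) = Y1_1 \<omega>"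
  by (simp_all add: joint_def pY0_def pY1_def pD_def pI0_def pY1_0_def pY1_1_def)

lemma measurable_joint [measurable]: "joint \<in> measurable M (joint_space MI)"
  unfolding joint_def joint_space_def obs_space_def by measurable

lemma sets_joint_law [simp, measurable_cong]: "sets joint_law = sets (joint_space MI)"
  by (simp add: joint_law_def)

lemma space_joint_law [simp]: "space joint_law = space (joint_space MI)"
  by (simp add: joint_law_def)

lemma vimage_joint_evD: "joint -` evD joint_law pD d \<inter> space M = evD M D d"
  using measurable_space[OF measurable_joint] by (auto simp: evD_def)

lemma vimage_joint_evDI: "joint -` evDI joint_law pD pI0 d \<iota> \<inter> space M = evDI M D I0 d \<iota>"
  using measurable_space[OF measurable_joint] by (auto simp: evDI_def)

lemma evD_joint_law_sets [measurable]: "evD joint_law pD d \<in> sets (joint_space MI)"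
  using evD_sets[of pD joint_law] by simp

lemma evDI_joint_law_sets [measurable]:
  "{\<iota>} \<in> sets MI \<Longrightarrow> evDI joint_law pD pI0 d \<iota> \<in> sets (joint_space MI)"
  using evDI_sets[of pD joint_law pI0 MI \<iota> d] by simp

lemma cexp_joint_law:
  "f \<in> borel_measurable (joint_space MI) \<Longrightarrow> A \<in> sets (joint_space MI) \<Longrightarrow>
     cexp joint_law f A = cexp M (\<lambda>\<omega>. f (joint \<omega>)) (joint -` A \<inter> space M)"
  unfolding joint_law_def by (rule cexp_distr) simp_all

lemma cexp_joint_law_evD:
  "f \<in> borel_measurable (joint_space MI) \<Longrightarrow>
     cexp joint_law f (evD joint_law pD d) = cexp M (\<lambda>\<omega>. f (joint \<omega>)) (evD M D d)"
  by (simp add: cexp_joint_law vimage_joint_evD)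

lemma cexp_joint_law_evDI:
  "f \<in> borel_measurable (joint_space MI) \<Longrightarrow> {\<iota>} \<in> sets MI \<Longrightarrow>
     cexp joint_law f (evDI joint_law pD pI0 d \<iota>) = cexp M (\<lambda>\<omega>. f (joint \<omega>)) (evDI M D I0 d \<iota>)"
  by (simp add: cexp_joint_law vimage_joint_evDI)

lemma ATT_joint_law: "ATT joint_law pY1_0 pY1_1 pD = ATT M Y1_0 Y1_1 D"
  unfolding ATT_def by (subst cexp_joint_law_evD) simp_all

lemma SB1_joint_law: "SB1 joint_law pY1_0 pD = SB1 M Y1_0 D"
  unfolding SB1_def by (simp add: cexp_joint_law_evD)

lemma SB0_joint_law: "{\<iota>} \<in> sets MI \<Longrightarrow> SB0 joint_law pY0 pD pI0 \<iota> = SB0 M Y0 D I0 \<iota>"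
  unfolding SB0_def by (simp add: cexp_joint_law_evDI)

lemma BSS_joint_law_iff: "BSS joint_law pY0 pY1_0 pD pI0 \<I>0 \<longleftrightarrow> BSS M Y0 Y1_0 D I0 \<I>0"
proof -
  have "\<forall>\<iota>\<in>\<I>0. {\<iota>} \<in> sets MI"
    using model by (simp add: did_model_def)
  then show ?thesis
    unfolding BSS_def SB1_joint_law by (simp add: SB0_joint_law cong: INF_cong SUP_cong)
qed

lemma distr_obs_joint_law:
  "distr joint_law (obs_space MI) fst = distr M (obs_space MI) (\<lambda>\<omega>. (Y0 \<omega>, Y1 \<omega>, D \<omega>, I0 \<omega>))"
proof -
  have "fst \<in> measurable (joint_space MI) (obs_space MI)"
    unfolding joint_space_def by measurable
  then show ?thesis
    unfolding joint_law_def by (simp add: distr_distr comp_def joint_def)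
qed

lemma measure_joint_law:
  "A \<in> sets (joint_space MI) \<Longrightarrow> measure joint_law A = measure M (joint -` A \<inter> space M)"
  unfolding joint_law_def by (rule measure_distr) simp_all

lemma integrable_joint_law_iff:
  fixes f :: "_ \<Rightarrow> real"
  shows "f \<in> borel_measurable (joint_space MI) \<Longrightarrow> integrable joint_law f \<longleftrightarrow> integrable M (\<lambda>\<omega>. f (joint \<omega>))"
  unfolding joint_law_def by (rule integrable_distr_eq) simp_all

lemma set_integrable_joint_law_iff:
  fixes f :: "_ \<Rightarrow> real"
  shows "f \<in> borel_measurable (joint_space MI) \<Longrightarrow> A \<in> sets (joint_space MI) \<Longrightarrow>
     set_integrable joint_law A f \<longleftrightarrow> set_integrable M (joint -` A \<inter> space M) (\<lambda>\<omega>. f (joint \<omega>))"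
  unfolding joint_law_def by (rule set_integrable_distr_iff) simp_all

lemma AE_joint_law_iff:
  "Measurable.pred (joint_space MI) P \<Longrightarrow> (AE z in joint_law. P z) \<longleftrightarrow> (AE \<omega> in M. P (joint \<omega>))"
  unfolding joint_law_def by (rule AE_distr_iff) simp_all

lemma did_model_joint_law: "did_model joint_law MI pY0 pY1 pD pI0 pY1_0 pY1_1 \<I>0"
  unfolding did_model_def
proof (intro conjI)
  note m = model[unfolded did_model_def]
  show "prob_space joint_law"
    unfolding joint_law_def by (rule prob_space_distr) simp
  show "pY0 \<in> borel_measurable joint_law" "pY1 \<in> borel_measurable joint_law"
    "pD \<in> borel_measurable joint_law" "pI0 \<in> measurable joint_law MI"
    "pY1_0 \<in> borel_measurable joint_law" "pY1_1 \<in> borel_measurable joint_law"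
    by measurable
  show singletons: "\<forall>\<iota>\<in>\<I>0. {\<iota>} \<in> sets MI"
    using m by simp
  show "AE z in joint_law. pD z \<in> {0, 1}"
    using m by (subst AE_joint_law_iff) simp_all
  show "AE z in joint_law. pY1 z = pY1_1 z * pD z + pY1_0 z * (1 - pD z)"
    using m by (subst AE_joint_law_iff) simp_all
  txt \<open>\<I>0 itself need not be measurable in MI; its countability is what makes this event measurable.\<close>
  have "{z \<in> space (joint_space MI). pI0 z \<in> \<I>0} = (\<Union>\<iota>\<in>\<I>0. pI0 -` {\<iota>} \<inter> space (joint_space MI))"
    by auto
  also have "\<dots> \<in> sets (joint_space MI)"
    using singletons countable_information_set by (intro sets.countable_UN'') (auto intro: measurable_sets)
  finally show "AE z in joint_law. pI0 z \<in> \<I>0"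
    using m by (subst AE_joint_law_iff) simp_all
  show "measure joint_law (evD joint_law pD 1) > 0" "measure joint_law (evD joint_law pD 0) > 0"
    "\<forall>\<iota>\<in>\<I>0. \<forall>d\<in>{0, 1}. measure joint_law (evDI joint_law pD pI0 d \<iota>) > 0"
    using m singletons by (simp_all add: measure_joint_law vimage_joint_evD vimage_joint_evDI)
  show "integrable joint_law pY1" "integrable joint_law pY1_0"
    using m by (simp_all add: integrable_joint_law_iff)
  show "set_integrable joint_law (evD joint_law pD 1) pY1_1"
    "\<forall>\<iota>\<in>\<I>0. \<forall>d\<in>{0, 1}. set_integrable joint_law (evDI joint_law pD pI0 d \<iota>) pY0"
    using m singletons
    by (simp_all add: set_integrable_joint_law_iff vimage_joint_evD vimage_joint_evDI)
qed

lemma latent_outcome_attaining: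
  assumes "\<theta> \<in> Theta_I M Y0 Y1 D I0 \<I>0"
  shows "\<exists>Y1_0'. did_model M MI Y0 Y1 D I0 Y1_0' Y1 \<I>0 \<and> BSS M Y0 Y1_0' D I0 \<I>0 \<and>
           ATT M Y1_0' Y1 D = \<theta>"
proof -
  note m = model[unfolded did_model_def]
  define c where "c = theta_OLS M Y1 D - \<theta> + cexp M Y1 (evD M D 0)"
  define Y1_0' where "Y1_0' \<omega> = (if D \<omega> = 1 then c else Y1 \<omega>)" for \<omega>
  have [measurable]: "Y1_0' \<in> borel_measurable M"
    unfolding Y1_0'_def by measurable
  have "integrable M Y1_0'"
  proof (rule Bochner_Integration.integrable_bound)
    show "integrable M (\<lambda>\<omega>. \<bar>c\<bar> + \<bar>Y1 \<omega>\<bar>)"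
      using m by simp
    show "AE \<omega> in M. norm (Y1_0' \<omega>) \<le> norm (\<bar>c\<bar> + \<bar>Y1 \<omega>\<bar>)"
      by (simp add: Y1_0'_def)
  qed measurable
  moreover have "AE \<omega> in M. Y1 \<omega> = Y1 \<omega> * D \<omega> + Y1_0' \<omega> * (1 - D \<omega>)"
    using m by (auto simp: Y1_0'_def elim!: AE_mp)
  moreover have "set_integrable M (evD M D 1) Y1"
    unfolding set_integrable_def
    by (rule integrable_mult_indicator) (measurable, use m in simp)
  ultimately have model': "did_model M MI Y0 Y1 D I0 Y1_0' Y1 \<I>0"
    using m unfolding did_model_def by simp
  have "cexp M Y1_0' (evD M D 1) = cexp M (\<lambda>_. c) (evD M D 1)"
    by (intro cexp_cong_AE) (auto simp: Y1_0'_def evD_def)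
  also have "\<dots> = c"
    using m by (intro cexp_const) auto
  finally have treated: "cexp M Y1_0' (evD M D 1) = c" .
  have untreated: "cexp M Y1_0' (evD M D 0) = cexp M Y1 (evD M D 0)"
    by (intro cexp_cong_AE) (auto simp: Y1_0'_def evD_def)
  have SB1_eq: "SB1 M Y1_0' D = theta_OLS M Y1 D - \<theta>"
    unfolding SB1_def treated untreated c_def by simp
  interpret latent: did_setting M MI Y0 Y1 D Y1_0' Y1 I0 \<I>0
    using model' by (rule did_setting.intro)
  have "BSS M Y0 Y1_0' D I0 \<I>0"
    using assms unfolding BSS_def SB1_eq mem_Theta_I_iff .
  moreover have "ATT M Y1_0' Y1 D = \<theta>"
    unfolding latent.ATT_eq_theta_OLS_minus_SB1 SB1_eq by simp
  ultimately show ?thesis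
    using model' by blast
qed

end

theorem proposition1:
  fixes M :: "'a measure" and MI :: "'i measure"
    and Y0 Y1 D Y1_0 Y1_1 :: "'a \<Rightarrow> real" and I0 :: "'a \<Rightarrow> 'i" and \<I>0 :: "'i set"
  assumes model: "did_model M MI Y0 Y1 D I0 Y1_0 Y1_1 \<I>0"
    and bss: "BSS M Y0 Y1_0 D I0 \<I>0"
  shows "ATT M Y1_0 Y1_1 D \<in> Theta_I M Y0 Y1 D I0 \<I>0 \<and>
    (\<forall>\<theta>\<in>Theta_I M Y0 Y1 D I0 \<I>0.
       \<exists>N. sets N = sets (joint_space MI) \<and>
           did_model N MI pY0 pY1 pD pI0 pY1_0 pY1_1 \<I>0 \<and>
           distr N (obs_space MI) fst = distr M (obs_space MI) (\<lambda>\<omega>. (Y0 \<omega>, Y1 \<omega>, D \<omega>, I0 \<omega>)) \<and>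
           BSS N pY0 pY1_0 pD pI0 \<I>0 \<and>
           ATT N pY1_0 pY1_1 pD = \<theta>)"
proof (intro conjI ballI)
  interpret did_setting M MI Y0 Y1 D Y1_0 Y1_1 I0 \<I>0
    using model by (rule did_setting.intro)
  show "ATT M Y1_0 Y1_1 D \<in> Theta_I M Y0 Y1 D I0 \<I>0"
    using bss by (rule ATT_mem_Theta_I)
  fix \<theta> assume "\<theta> \<in> Theta_I M Y0 Y1 D I0 \<I>0"
  then obtain Y1_0' where model': "did_model M MI Y0 Y1 D I0 Y1_0' Y1 \<I>0"
    and bss': "BSS M Y0 Y1_0' D I0 \<I>0" and ATT': "ATT M Y1_0' Y1 D = \<theta>"
    using latent_outcome_attaining by blast
  interpret latent: did_setting M MI Y0 Y1 D Y1_0' Y1 I0 \<I>0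
    using model' by (rule did_setting.intro)
  show "\<exists>N. sets N = sets (joint_space MI) \<and>
           did_model N MI pY0 pY1 pD pI0 pY1_0 pY1_1 \<I>0 \<and>
           distr N (obs_space MI) fst = distr M (obs_space MI) (\<lambda>\<omega>. (Y0 \<omega>, Y1 \<omega>, D \<omega>, I0 \<omega>)) \<and>
           BSS N pY0 pY1_0 pD pI0 \<I>0 \<and>
           ATT N pY1_0 pY1_1 pD = \<theta>"
    using latent.did_model_joint_law latent.distr_obs_joint_law bss' ATT'
    by (intro exI[of _ latent.joint_law]) (simp add: latent.BSS_joint_law_iff latent.ATT_joint_law)
qed

end
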